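(* (i) For each $n$, $$\mathrm{Var}[\widetilde H_n]\ \ge\ \sum_{j=1}^{\lfloor 2h_n\rfloor} r_{j,n}(1-p_{j,n})\ \ge\ \sum_{j=1}^{\lfloor 2h_n\rfloor}\widetilde r_{j,n}(1-p_{j,n}),$$ where $\widetilde r_{j,n}=p_{j,n}+2\sum_{l=j+1}^{\lfloor 2h_n\rfloor}p_{l,n}$. (ii) If $\liminf_n \mathrm{Var}[\widetilde H_n]>0$, then as $n\to\infty$ $$\mathrm{Var}[\widetilde H_n]\sim \sum_{j=1}^{\lfloor 2h_n\rfloor}\widetilde r_{j,n}(1-p_{j,n}),$$ and, with $$V_n=\sum_{j=1}^{\lfloor 3\widehat H_n\rfloor}p_{j,n}(1-p_{j,n})+2\sum_{l=2}^{\lfloor 3\widehat H_n\rfloor}p_{l,n}\sum_{j=1}^{l-1}(1-p_{j,n}),$$ we have $V_n/\mathrm{Var}[\widetilde H_n]\to 1$ in probability.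
   Context: $X$ is a positive random variable with survival function $S(x)=P(X>x)$ satisfying $S(x)>0$ for all $x\ge0$. Write $S_-(x)=P(X\ge x)$. For each integer $n\ge1$, the theoretical $h$-index is $$h_n=\sup\{x\ge 0:\ nS_-(x)\ge x\}.$$ Let $X_1,\dots,X_n$ be independent copies of $X$, and write $$\widehat S_n(x)=\frac1n\sum_{i=1}^n\mathbf 1\{X_i>x\},\qquad \widehat S_{n-}(x)=\frac1n\sum_{i=1}^n\mathbf 1\{X_i\ge x\}.$$ The empirical $h$-index is $$\widehat H_n=\sup\{x\ge0:\ n\widehat S_{n-}(x)\ge x\},$$ and $$\widetilde H_n=\sum_{j=1}^n\mathbf 1\{\widehat S_n(j-1)\ge j/n\}.$$ For $1\le j\le n$, $$p_{j,n}=P\bigl(n\widehat S_n(j-1)\ge j\bigr)=\sum_{y=j}^n\binom ny S(j-1)^y\bigl(1-S(j-1)\bigr)^{n-y},$$ and $p_{j,n}=0$ for $j>n$. Finally, $$r_{j,n}=p_{j,n}+2\sum_{l=j+1}^n p_{l,n}.$$ The notation $a_n\sim b_n$ means $a_n/b_n\to1$. *)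

theory Defs
  imports "HOL-Probability.Probability"
begin

text \<open>D is the law of X (a probability measure on the Borel sets of the reals).\<close>

definition surv :: "real measure \<Rightarrow> real \<Rightarrow> real" where
  "surv D x = measure D {x<..}"

definition surv_minus :: "real measure \<Rightarrow> real \<Rightarrow> real" where
  "surv_minus D x = measure D {x..}"

definition h_index :: "real measure \<Rightarrow> nat \<Rightarrow> real" where
  "h_index D n = Sup {x. x \<ge> 0 \<and> real n * surv_minus D x \<ge> x}"

definition p_jn :: "real measure \<Rightarrow> nat \<Rightarrow> nat \<Rightarrow> real" where
  "p_jn D j n = (if 1 \<le> j \<and> j \<le> n then
     (\<Sum>y=j..n. real (n choose y) * surv D (real j - 1) ^ y * (1 - surv D (real j - 1)) ^ (n - y))
   else 0)"

definition r_jn :: "real measure \<Rightarrow> nat \<Rightarrow> nat \<Rightarrow> real" where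
  "r_jn D j n = p_jn D j n + 2 * (\<Sum>l=j+1..n. p_jn D l n)"

definition rt_jn :: "real measure \<Rightarrow> nat \<Rightarrow> nat \<Rightarrow> real" where
  "rt_jn D j n = p_jn D j n + 2 * (\<Sum>l=j+1..nat \<lfloor>2 * h_index D n\<rfloor>. p_jn D l n)"

definition emp_surv :: "(nat \<Rightarrow> 'a \<Rightarrow> real) \<Rightarrow> nat \<Rightarrow> 'a \<Rightarrow> real \<Rightarrow> real" where
  "emp_surv X n \<omega> x = (1 / real n) * real (card {i. i < n \<and> X i \<omega> > x})"

definition emp_surv_minus :: "(nat \<Rightarrow> 'a \<Rightarrow> real) \<Rightarrow> nat \<Rightarrow> 'a \<Rightarrow> real \<Rightarrow> real" where
  "emp_surv_minus X n \<omega> x = (1 / real n) * real (card {i. i < n \<and> X i \<omega> \<ge> x})"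

definition H_hat :: "(nat \<Rightarrow> 'a \<Rightarrow> real) \<Rightarrow> nat \<Rightarrow> 'a \<Rightarrow> real" where
  "H_hat X n \<omega> = Sup {x. x \<ge> 0 \<and> real n * emp_surv_minus X n \<omega> x \<ge> x}"

definition H_tilde :: "(nat \<Rightarrow> 'a \<Rightarrow> real) \<Rightarrow> nat \<Rightarrow> 'a \<Rightarrow> real" where
  "H_tilde X n \<omega> = (\<Sum>j=1..n. if emp_surv X n \<omega> (real j - 1) \<ge> real j / real n then 1 else 0)"

definition V_n :: "real measure \<Rightarrow> (nat \<Rightarrow> 'a \<Rightarrow> real) \<Rightarrow> nat \<Rightarrow> 'a \<Rightarrow> real" where
  "V_n D X n \<omega> = (let m = nat \<lfloor>3 * H_hat X n \<omega>\<rfloor> in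
     (\<Sum>j=1..m. p_jn D j n * (1 - p_jn D j n))
     + 2 * (\<Sum>l=2..m. p_jn D l n * (\<Sum>j=1..l-1. 1 - p_jn D j n)))"

end

theory Submission
  imports Defs "HOL-Real_Asymp.Real_Asymp"
begin

(* For nested events B_1 \<supseteq> B_2 \<supseteq> ... with P(B_l) = f l, the variance of
   B_1 + ... + B_N is the polynomial  nested_var f N  in the values f l.  The counting
   index H~_n is exactly such a sum with B_j = {at least j of X_1..X_n exceed j - 1},
   so Var H~_n = nested_var p n, where p j = p_{j,n}.  The sums over r_{j,n},
   r~_{j,n} and the estimator V_n are the same polynomial evaluated at other cut-offs
   (n, floor(2 h_n), floor(3 H^_n)), and nested_var f N is nondecreasing in N with
   increments at most (2l - 1) f l.  This gives (i).
   For (ii): a Chernoff bound shows p_{l,n} \<le> (e^(1/2)/2)^l once l > 2 h_n, so the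
   gap between the full variance and the truncation at floor(2 h_n) is bounded by the
   tail of a convergent series; since h_n \<rightarrow> \<infinity> this gap tends to 0, and dividing by
   the variance (bounded away from 0) yields the asymptotic equivalence.  Finally,
   outside the event {fewer than 2h_n/3 sample points are \<ge> 2h_n/3}, whose probability
   is exponentially small in h_n by a lower Chernoff bound, V_n lies between the
   truncated and the full variance, hence V_n / Var H~_n \<rightarrow> 1 in probability. *)

section \<open>The variance polynomial of nested indicators\<close>

text \<open>If B_1 \<supseteq> ... \<supseteq> B_N are events with P(B_l) = f l, then E[(\<Sum> B_l)^2] is
  \<Sum>_l (2l - 1) f l, so the variance of the sum is the following polynomial.\<close>
definition nested_var :: "(nat \<Rightarrow> real) \<Rightarrow> nat \<Rightarrow> real" where
  "nested_var f N = (\<Sum>l=1..N. (2 * real l - 1) * f l) - (\<Sum>l=1..N. f l)^2"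

lemma nested_var_Suc:
  "nested_var f (Suc N) =
     nested_var f N + f (Suc N) * (1 - f (Suc N)) + 2 * f (Suc N) * (\<Sum>j=1..N. 1 - f j)"
proof -
  have s: "(\<Sum>j=1..N. 1 - f j) = real N - (\<Sum>j=1..N. f j)"
    by (simp add: sum_subtractf)
  show ?thesis unfolding nested_var_def s by (simp add: algebra_simps power2_eq_square)
qed

lemma sum_sum_max:
  fixes f :: "nat \<Rightarrow> real"
  shows "(\<Sum>j=1..N. \<Sum>l=1..N. f (max j l)) = (\<Sum>l=1..N. (2 * real l - 1) * f l)"
proof (induction N)
  case 0 then show ?case by simp
next
  case (Suc N)
  have split: "(\<Sum>j=1..Suc N. \<Sum>l=1..Suc N. f (max j l)) =
     (\<Sum>j=1..N. \<Sum>l=1..N. f (max j l)) + (\<Sum>j=1..N. f (Suc N)) + (\<Sum>l=1..N. f (Suc N)) + f (Suc N)"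
    by (simp add: sum.distrib max_def distrib_right)
  show ?case unfolding split Suc by (simp add: algebra_simps)
qed

lemma nested_var_r_form:
  "(\<Sum>j=1..N. (f j + 2 * (\<Sum>l=j+1..N. f l)) * (1 - f j)) = nested_var f N"
proof (induction N)
  case 0 then show ?case by (simp add: nested_var_def)
next
  case (Suc N)
  have "(\<Sum>j=1..N. (f j + 2 * (\<Sum>l=j+1..Suc N. f l)) * (1 - f j)) =
        (\<Sum>j=1..N. (f j + 2 * (\<Sum>l=j+1..N. f l)) * (1 - f j) + 2 * f (Suc N) * (1 - f j))"
    by (intro sum.cong refl) (auto simp: algebra_simps)
  then have split: "(\<Sum>j=1..Suc N. (f j + 2 * (\<Sum>l=j+1..Suc N. f l)) * (1 - f j)) =
     (\<Sum>j=1..N. (f j + 2 * (\<Sum>l=j+1..N. f l)) * (1 - f j)) + (\<Sum>j=1..N. 2 * f (Suc N) * (1 - f j))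
       + f (Suc N) * (1 - f (Suc N))"
    by (simp add: sum.distrib)
  show ?case unfolding split Suc nested_var_Suc by (simp add: sum_distrib_left)
qed

lemma nested_var_V_form:
  "(\<Sum>j=1..N. f j * (1 - f j)) + 2 * (\<Sum>l=2..N. f l * (\<Sum>j=1..l-1. 1 - f j)) = nested_var f N"
proof (induction N)
  case 0 then show ?case by (simp add: nested_var_def)
next
  case (Suc N)
  show ?case
  proof (cases "N = 0")
    case True then show ?thesis by (simp add: nested_var_def power2_eq_square algebra_simps)
  next
    case False
    then have "(\<Sum>l=2..Suc N. f l * (\<Sum>j=1..l-1. 1 - f j)) =
        (\<Sum>l=2..N. f l * (\<Sum>j=1..l-1. 1 - f j)) + f (Suc N) * (\<Sum>j=1..N. 1 - f j)"
      by simp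
    then show ?thesis using Suc by (simp add: nested_var_Suc algebra_simps)
  qed
qed

lemma nested_var_increment:
  assumes "\<And>l. 0 \<le> f l" "\<And>l. f l \<le> 1"
  shows "0 \<le> nested_var f (Suc N) - nested_var f N"
    and "nested_var f (Suc N) - nested_var f N \<le> (2 * real (Suc N) - 1) * f (Suc N)"
proof -
  have s0: "0 \<le> (\<Sum>j=1..N. 1 - f j)" using assms by (intro sum_nonneg) auto
  have "(\<Sum>j=1..N. 1 - f j) \<le> (\<Sum>j=1..N. (1::real))" using assms by (intro sum_mono) auto
  then have s1: "(\<Sum>j=1..N. 1 - f j) \<le> real N" by simp
  have f0: "0 \<le> f (Suc N)" "f (Suc N) \<le> 1" using assms by auto
  show "0 \<le> nested_var f (Suc N) - nested_var f N" unfolding nested_var_Suc using f0 s0 by simp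
  have "f (Suc N) * (1 - f (Suc N)) \<le> f (Suc N)" using f0 by (simp add: mult_left_le)
  moreover have "2 * f (Suc N) * (\<Sum>j=1..N. 1 - f j) \<le> 2 * f (Suc N) * real N"
    using f0 s1 by (intro mult_left_mono) auto
  moreover have "(2 * real (Suc N) - 1) * f (Suc N) = f (Suc N) + 2 * f (Suc N) * real N"
    by (simp add: algebra_simps)
  ultimately show "nested_var f (Suc N) - nested_var f N \<le> (2 * real (Suc N) - 1) * f (Suc N)"
    unfolding nested_var_Suc by linarith
qed

lemma nested_var_mono_bound:
  assumes "\<And>l. 0 \<le> f l" "\<And>l. f l \<le> 1" "N1 \<le> N2"
  shows "0 \<le> nested_var f N2 - nested_var f N1
    \<and> nested_var f N2 - nested_var f N1 \<le> (\<Sum>l\<in>{N1<..N2}. (2 * real l - 1) * f l)"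
  using assms(3)
proof (induction N2 rule: dec_induct)
  case base then show ?case by simp
next
  case (step k)
  have split: "{N1<..Suc k} = insert (Suc k) {N1<..k}" using step by auto
  show ?case using step nested_var_increment[of f k, OF assms(1,2)] unfolding split by simp
qed

lemma nested_var_stable:
  assumes "\<And>l. 0 \<le> f l" "\<And>l. f l \<le> 1" "\<And>l. l > n \<Longrightarrow> f l = 0" "n \<le> N"
  shows "nested_var f N = nested_var f n"
proof -
  have "(\<Sum>l\<in>{n<..N}. (2 * real l - 1) * f l) = 0" using assms(3) by (intro sum.neutral) auto
  then show ?thesis using nested_var_mono_bound[of f, OF assms(1,2,4)] by linarith
qed

lemma nested_var_le_support:
  assumes "\<And>l. 0 \<le> f l" "\<And>l. f l \<le> 1" "\<And>l. l > n \<Longrightarrow> f l = 0"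
  shows "nested_var f K \<le> nested_var f n"
proof (cases "K \<le> n")
  case True then show ?thesis using nested_var_mono_bound[of f K n, OF assms(1,2) True] by linarith
next
  case False
  then have "n \<le> K" by simp
  then show ?thesis using nested_var_stable[of f n K, OF assms] by simp
qed

lemma sum_truncate_le:
  fixes f :: "nat \<Rightarrow> real"
  assumes "\<And>l. 0 \<le> f l" "\<And>l. l > n \<Longrightarrow> f l = 0"
  shows "(\<Sum>l=a..b. f l) \<le> (\<Sum>l=a..n. f l)"
proof -
  have "(\<Sum>l=a..b. f l) = (\<Sum>l\<in>{a..b} \<inter> {..n}. f l)"
    using assms(2) by (intro sum.mono_neutral_right) (auto simp: not_le[symmetric])
  also have "\<dots> \<le> (\<Sum>l=a..n. f l)" using assms(1) by (intro sum_mono2) auto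
  finally show ?thesis .
qed

section \<open>Chernoff-type bounds for binomial tails\<close>

lemma sum_le_weighted_sum:
  fixes b w :: "nat \<Rightarrow> real"
  assumes "A \<subseteq> {0..n}" "\<And>y. y \<in> A \<Longrightarrow> 1 \<le> w y" "\<And>y. 0 \<le> b y" "\<And>y. 0 \<le> w y"
  shows "(\<Sum>y\<in>A. b y) \<le> (\<Sum>y=0..n. b y * w y)"
proof -
  have "(\<Sum>y\<in>A. b y) \<le> (\<Sum>y\<in>A. b y * w y)"
    using assms(2,3) by (intro sum_mono) (metis mult_left_mono mult.right_neutral)
  also have "\<dots> \<le> (\<Sum>y=0..n. b y * w y)"
    using assms(1,3,4) by (intro sum_mono2) auto
  finally show ?thesis .
qed

lemma binomial_generating_sum:
  fixes s t :: real
  shows "(\<Sum>y=0..n. real (n choose y) * s ^ y * (1 - s) ^ (n - y) * t ^ y) = (t * s + (1 - s)) ^ n"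
proof -
  have "(\<Sum>y=0..n. real (n choose y) * s ^ y * (1 - s) ^ (n - y) * t ^ y)
      = (\<Sum>y=0..n. real (n choose y) * (t * s) ^ y * (1 - s) ^ (n - y))"
    by (intro sum.cong refl) (simp add: power_mult_distrib mult_ac)
  also have "\<dots> = (t * s + (1 - s)) ^ n"
    by (subst binomial_ring) (simp add: atLeast0AtMost)
  finally show ?thesis .
qed

lemma binomial_upper_tail:
  fixes s :: real
  assumes s: "0 \<le> s" "s \<le> 1" and mean: "real n * s \<le> real l / 2"
  shows "(\<Sum>y=l..n. real (n choose y) * s ^ y * (1 - s) ^ (n - y)) \<le> (exp (1/2) / 2) ^ l"
proof -
  have "(\<Sum>y=l..n. real (n choose y) * s ^ y * (1 - s) ^ (n - y))
      \<le> (\<Sum>y=0..n. real (n choose y) * s ^ y * (1 - s) ^ (n - y) * (2 ^ y / 2 ^ l))"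
    using s by (intro sum_le_weighted_sum) (auto simp: power_increasing)
  also have "\<dots> = (2 * s + (1 - s)) ^ n / 2 ^ l"
    using binomial_generating_sum[of n s 2]
    by (simp add: sum_divide_distrib[symmetric] mult.assoc[symmetric])
  also have "\<dots> \<le> exp s ^ n / 2 ^ l"
    using s by (intro divide_right_mono power_mono) (auto simp: exp_ge_add_one_self add.commute)
  also have "exp s ^ n = exp (real n * s)" by (simp add: exp_of_nat_mult)
  also have "exp (real n * s) / 2 ^ l \<le> exp (real l / 2) / 2 ^ l"
    using mean by (intro divide_right_mono) auto
  also have "\<dots> = (exp (1/2) / 2) ^ l"
    using exp_of_nat_mult[of l "1/2"] by (simp add: power_divide)
  finally show ?thesis .
qed

text \<open>The numerical fact behind the exponent n s/4 in the lower tail bound.\<close>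
lemma exp_neg_third_le: "exp (-1/3) \<le> (3/4::real)"
proof -
  have "4/3 \<le> exp (1/3::real)" using exp_ge_add_one_self[of "1/3::real"] by simp
  then have "1 / exp (1/3::real) \<le> 3/4" by (simp add: field_simps)
  then show ?thesis by (simp add: exp_minus inverse_eq_divide)
qed

lemma binomial_lower_tail:
  fixes s a :: real
  assumes s: "0 \<le> s" "s \<le> 1"
  shows "(\<Sum>y\<in>{y. y \<le> n \<and> real y < a}. real (n choose y) * s ^ y * (1 - s) ^ (n - y))
    \<le> exp (a/3 - real n * s / 4)"
proof -
  have weight: "1 \<le> exp (a/3) * (3/4::real) ^ y" if "real y < a" for y
  proof -
    have "exp (- real y / 3) = exp (-1/3) ^ y" by (simp add: exp_of_nat_mult[symmetric])
    also have "\<dots> \<le> (3/4) ^ y" using exp_neg_third_le by (intro power_mono) auto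
    finally have "exp (a/3) * exp (- real y / 3) \<le> exp (a/3) * (3/4::real) ^ y" by simp
    moreover have "1 \<le> exp (a/3) * exp (- real y / 3)" using that by (simp add: exp_add[symmetric])
    ultimately show ?thesis by linarith
  qed
  have "(\<Sum>y\<in>{y. y \<le> n \<and> real y < a}. real (n choose y) * s ^ y * (1 - s) ^ (n - y))
      \<le> (\<Sum>y=0..n. real (n choose y) * s ^ y * (1 - s) ^ (n - y) * (exp (a/3) * (3/4) ^ y))"
    using s weight by (intro sum_le_weighted_sum) auto
  also have "\<dots> = exp (a/3) * (\<Sum>y=0..n. real (n choose y) * s ^ y * (1 - s) ^ (n - y) * (3/4) ^ y)"
    by (simp add: sum_distrib_left mult_ac)
  also have "\<dots> = exp (a/3) * (3/4 * s + (1 - s)) ^ n"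
    by (simp only: binomial_generating_sum)
  also have "\<dots> \<le> exp (a/3) * exp (- s / 4) ^ n"
  proof -
    have "3/4 * s + (1 - s) \<le> exp (- s/4)" using exp_ge_add_one_self[of "- s/4"] by simp
    then show ?thesis using s by (intro mult_left_mono power_mono) auto
  qed
  also have "exp (- s / 4) ^ n = exp (- (real n * s / 4))"
    using exp_of_nat_mult[of n "-s/4"] by simp
  also have "exp (a/3) * exp (- (real n * s / 4)) = exp (a/3 - real n * s / 4)"
    by (simp add: exp_add[symmetric])
  finally show ?thesis .
qed

section \<open>The theoretical h-index\<close>

lemma surv_minus_bounds: "prob_space D \<Longrightarrow> 0 \<le> surv_minus D x \<and> surv_minus D x \<le> 1"
  unfolding surv_minus_def by (simp add: prob_space.prob_le_1)

lemma surv_bounds: "prob_space D \<Longrightarrow> 0 \<le> surv D x \<and> surv D x \<le> 1"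
  unfolding surv_def by (simp add: prob_space.prob_le_1)

lemma surv_minus_antimono:
  assumes "prob_space D" "sets D = sets borel" "x \<le> y"
  shows "surv_minus D y \<le> surv_minus D x"
  unfolding surv_minus_def using assms
  by (intro finite_measure.finite_measure_mono prob_space.finite_measure) auto

lemma surv_le_surv_minus:
  assumes "prob_space D" "sets D = sets borel" "y \<le> x"
  shows "surv D x \<le> surv_minus D y"
  unfolding surv_minus_def surv_def using assms
  by (intro finite_measure.finite_measure_mono prob_space.finite_measure) auto

lemma h_index_set_bdd:
  assumes "prob_space D"
  shows "bdd_above {x. x \<ge> 0 \<and> real n * surv_minus D x \<ge> x}"
proof (rule bdd_aboveI[where M="real n"])
  fix x assume "x \<in> {x. x \<ge> 0 \<and> real n * surv_minus D x \<ge> x}"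
  then have "x \<le> real n * surv_minus D x" by auto
  also have "\<dots> \<le> real n" using surv_minus_bounds[OF assms, of x] by (simp add: mult_left_le)
  finally show "x \<le> real n" .
qed

lemma le_h_index:
  assumes "prob_space D" "0 \<le> x" "x \<le> real n * surv_minus D x"
  shows "x \<le> h_index D n"
  unfolding h_index_def using assms by (intro cSup_upper h_index_set_bdd) auto

lemma h_index_nonneg: "prob_space D \<Longrightarrow> 0 \<le> h_index D n"
  using le_h_index[of D 0] surv_minus_bounds by simp

lemma above_h_index:
  assumes "prob_space D" "h_index D n < x"
  shows "real n * surv_minus D x < x"
  using le_h_index[OF assms(1), of x n] assms h_index_nonneg[OF assms(1), of n] by linarith

lemma below_h_index:
  assumes "prob_space D" "y < h_index D n"
  obtains x where "y < x" "0 \<le> x" "x \<le> real n * surv_minus D x"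
proof -
  have "{x. x \<ge> 0 \<and> real n * surv_minus D x \<ge> x} \<noteq> {}"
    using surv_minus_bounds[OF assms(1)] by (auto intro!: exI[of _ 0])
  then show ?thesis using assms(2) that unfolding h_index_def by (auto elim: less_cSupE)
qed

lemma h_index_tendsto_infinity:
  assumes PD: "prob_space D" and SD: "sets D = sets borel"
    and Spos: "\<And>x. x \<ge> 0 \<Longrightarrow> surv D x > 0"
  shows "filterlim (h_index D) at_top sequentially"
  unfolding filterlim_at_top
proof
  fix Z :: real
  define K where "K = max Z 0"
  define s where "s = surv_minus D K"
  have "0 < surv D K" using Spos K_def by simp
  also have "surv D K \<le> s" unfolding s_def by (rule surv_le_surv_minus[OF PD SD]) simp
  finally have s: "0 < s" .
  show "\<forall>\<^sub>F n in sequentially. Z \<le> h_index D n"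
    unfolding eventually_sequentially
  proof (intro exI allI impI)
    fix n assume "nat \<lceil>K / s\<rceil> \<le> n"
    then have "K / s \<le> real n" by linarith
    then have "K \<le> real n * surv_minus D K" using s unfolding s_def by (simp add: field_simps)
    then have "K \<le> h_index D n" using le_h_index[OF PD, of K n] by (simp add: K_def)
    then show "Z \<le> h_index D n" unfolding K_def by simp
  qed
qed

lemma nat_floor_tendsto_infinity:
  fixes f :: "nat \<Rightarrow> real"
  assumes "filterlim f at_top sequentially"
  shows "filterlim (\<lambda>n. nat \<lfloor>2 * f n\<rfloor> + 1) at_top sequentially"
  unfolding filterlim_at_top
proof
  fix Z :: nat
  have "\<forall>\<^sub>F n in sequentially. real Z \<le> f n \<and> 0 \<le> f n"
    using assms by (auto simp: filterlim_at_top intro: eventually_conj)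
  then show "\<forall>\<^sub>F n in sequentially. Z \<le> nat \<lfloor>2 * f n\<rfloor> + 1"
    by (rule eventually_mono) linarith
qed

definition series_tail :: "(nat \<Rightarrow> real) \<Rightarrow> nat \<Rightarrow> real" where
  "series_tail a k = suminf a - (\<Sum>l<k. a l)"

lemma series_tail_bound:
  assumes "summable a" "\<And>l. 0 \<le> a l" "m \<le> n"
  shows "(\<Sum>l\<in>{m<..n}. a l) \<le> series_tail a (Suc m)"
proof -
  have split: "{..<Suc n} = {..<Suc m} \<union> {m<..n}" using assms(3) by auto
  have "(\<Sum>l<Suc n. a l) = (\<Sum>l<Suc m. a l) + (\<Sum>l\<in>{m<..n}. a l)"
    unfolding split by (rule sum.union_disjoint) auto
  moreover have "(\<Sum>l<Suc n. a l) \<le> suminf a" using assms by (intro sum_le_suminf) auto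
  ultimately show ?thesis unfolding series_tail_def by linarith
qed

lemma series_tail_nonneg:
  assumes "summable a" "\<And>l. 0 \<le> a l"
  shows "0 \<le> series_tail a k"
  using sum_le_suminf[of a "{..<k}"] assms unfolding series_tail_def by auto

lemma series_tail_tendsto_zero:
  assumes "summable a"
  shows "series_tail a \<longlonglongrightarrow> 0"
proof -
  have "(\<lambda>k. suminf a - (\<Sum>l<k. a l)) \<longlonglongrightarrow> suminf a - suminf a"
    by (intro tendsto_intros summable_LIMSEQ assms)
  then show ?thesis unfolding series_tail_def by simp
qed

text \<open>The ratio e^(1/2)/2 < 1 of the upper binomial tail bound, and the summable
  weights 2 l q^l that dominate the terms (2l - 1) p_{l,n} beyond 2 h_n.\<close>
definition chernoff_ratio :: real where
  "chernoff_ratio = exp (1/2) / 2"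

definition tail_weight :: "nat \<Rightarrow> real" where
  "tail_weight l = 2 * (chernoff_ratio ^ l * real l)"

lemma chernoff_ratio_less_1: "chernoff_ratio < 1"
proof -
  have "exp (1/2) * exp (1/2) = exp (1::real)" by (simp add: exp_add[symmetric])
  also have "\<dots> < 2 * 2" using exp_le by simp
  finally have "exp (1/2::real) ^ 2 < 2 ^ 2" by (simp add: power2_eq_square)
  then have "exp (1/2::real) < 2" by (rule power_less_imp_less_base) simp
  then show ?thesis unfolding chernoff_ratio_def by simp
qed

lemma tail_weight_summable: "summable tail_weight"
proof -
  have "norm chernoff_ratio < 1" using chernoff_ratio_less_1 by (simp add: chernoff_ratio_def)
  from geometric_sums_times_n[OF this] show ?thesis
    unfolding tail_weight_def by (intro summable_mult) (auto dest: sums_summable)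
qed

lemma tail_weight_nonneg: "0 \<le> tail_weight l"
  unfolding tail_weight_def chernoff_ratio_def by simp

section \<open>The probabilities p_{j,n}\<close>

lemma p_jn_zero: "n < j \<Longrightarrow> p_jn D j n = 0"
  unfolding p_jn_def by auto

lemma binomial_sum_le_1:
  fixes s :: real
  assumes "0 \<le> s" "s \<le> 1" "A \<subseteq> {0..n}"
  shows "(\<Sum>y\<in>A. real (n choose y) * s ^ y * (1 - s) ^ (n - y)) \<le> 1"
proof -
  have "(\<Sum>y\<in>A. real (n choose y) * s ^ y * (1 - s) ^ (n - y))
      \<le> (\<Sum>y=0..n. real (n choose y) * s ^ y * (1 - s) ^ (n - y) * 1 ^ y)"
    using assms by (intro sum_le_weighted_sum) auto
  also have "\<dots> = 1" using binomial_generating_sum[of n s 1] by simp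
  finally show ?thesis .
qed

lemma p_jn_bounds:
  assumes "prob_space D"
  shows "0 \<le> p_jn D j n \<and> p_jn D j n \<le> 1"
  using surv_bounds[OF assms, of "real j - 1"]
  unfolding p_jn_def by (auto intro!: sum_nonneg binomial_sum_le_1)

text \<open>Beyond 2 h_n, where n S(l - 1) \<le> l/2, the upper Chernoff bound makes p_{l,n}
  geometrically small.\<close>
lemma p_jn_small:
  assumes PD: "prob_space D" and SD: "sets D = sets borel"
    and l: "2 * h_index D n < real l" "2 \<le> l"
  shows "p_jn D l n \<le> chernoff_ratio ^ l"
proof (cases "l \<le> n")
  case False
  then show ?thesis unfolding p_jn_def chernoff_ratio_def by auto
next
  case True
  define s where "s = surv D (real l - 1)"
  have s01: "0 \<le> s" "s \<le> 1" using surv_bounds[OF PD] unfolding s_def by auto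
  have "s \<le> surv_minus D (real l / 2)"
    unfolding s_def using l by (intro surv_le_surv_minus[OF PD SD]) auto
  then have "real n * s \<le> real n * surv_minus D (real l / 2)" by (intro mult_left_mono) auto
  also have "\<dots> < real l / 2" using l by (intro above_h_index[OF PD]) auto
  finally have mean: "real n * s \<le> real l / 2" by simp
  have "p_jn D l n = (\<Sum>y=l..n. real (n choose y) * s ^ y * (1 - s) ^ (n - y))"
    unfolding p_jn_def s_def using True l by auto
  also have "\<dots> \<le> chernoff_ratio ^ l"
    unfolding chernoff_ratio_def by (rule binomial_upper_tail[OF s01 mean])
  finally show ?thesis .
qed

lemma rt_sum_eq_nested_var:
  "(\<Sum>j=1..nat \<lfloor>2 * h_index D n\<rfloor>. rt_jn D j n * (1 - p_jn D j n))
    = nested_var (\<lambda>j. p_jn D j n) (nat \<lfloor>2 * h_index D n\<rfloor>)"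
  unfolding rt_jn_def by (rule nested_var_r_form)

lemma truncation_gap_bound:
  assumes PD: "prob_space D" and SD: "sets D = sets borel" and h: "1 \<le> h_index D n"
  defines "m \<equiv> nat \<lfloor>2 * h_index D n\<rfloor>"
  shows "0 \<le> nested_var (\<lambda>j. p_jn D j n) n - nested_var (\<lambda>j. p_jn D j n) m
    \<and> nested_var (\<lambda>j. p_jn D j n) n - nested_var (\<lambda>j. p_jn D j n) m
        \<le> series_tail tail_weight (m + 1)"
proof (cases "m \<le> n")
  case False
  then have "nested_var (\<lambda>j. p_jn D j n) m = nested_var (\<lambda>j. p_jn D j n) n"
    by (intro nested_var_stable) (auto simp: p_jn_zero p_jn_bounds[OF PD])
  then show ?thesis using series_tail_nonneg[OF tail_weight_summable tail_weight_nonneg] by simp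
next
  case True
  have "(\<Sum>l\<in>{m<..n}. (2 * real l - 1) * p_jn D l n) \<le> (\<Sum>l\<in>{m<..n}. tail_weight l)"
  proof (rule sum_mono)
    fix l assume l: "l \<in> {m<..n}"
    then have "\<lfloor>2 * h_index D n\<rfloor> < int l"
      using h_index_nonneg[OF PD, of n] unfolding m_def by auto
    then have l1: "2 * h_index D n < real l" by (simp add: floor_less_iff)
    then have l2: "2 \<le> l" using h by linarith
    have "(2 * real l - 1) * p_jn D l n \<le> (2 * real l) * p_jn D l n"
      using p_jn_bounds[OF PD] by (intro mult_right_mono) auto
    also have "\<dots> \<le> (2 * real l) * chernoff_ratio ^ l"
      using p_jn_small[OF PD SD l1 l2] by (intro mult_left_mono) auto
    finally show "(2 * real l - 1) * p_jn D l n \<le> tail_weight l"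
      unfolding tail_weight_def by (simp add: ac_simps)
  qed
  also have "\<dots> \<le> series_tail tail_weight (m + 1)"
    using series_tail_bound[OF tail_weight_summable tail_weight_nonneg True] by simp
  finally show ?thesis
    using nested_var_mono_bound[of "\<lambda>j. p_jn D j n" m n] p_jn_bounds[OF PD] True by fastforce
qed

lemma truncation_gap_tendsto_zero:
  assumes PD: "prob_space D" and SD: "sets D = sets borel"
    and Spos: "\<And>x. x \<ge> 0 \<Longrightarrow> surv D x > 0"
  shows "(\<lambda>n. nested_var (\<lambda>j. p_jn D j n) n
             - nested_var (\<lambda>j. p_jn D j n) (nat \<lfloor>2 * h_index D n\<rfloor>)) \<longlonglongrightarrow> 0"
proof (rule tendsto_sandwich[OF _ _ tendsto_const])
  have htop: "filterlim (h_index D) at_top sequentially"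
    by (rule h_index_tendsto_infinity[OF PD SD Spos])
  then have h1: "\<forall>\<^sub>F n in sequentially. 1 \<le> h_index D n"
    by (simp add: filterlim_at_top)
  show "(\<lambda>n. series_tail tail_weight (nat \<lfloor>2 * h_index D n\<rfloor> + 1)) \<longlonglongrightarrow> 0"
    using filterlim_compose[OF series_tail_tendsto_zero[OF tail_weight_summable]
        nat_floor_tendsto_infinity[OF htop]] .
  show "\<forall>\<^sub>F n in sequentially. 0 \<le> nested_var (\<lambda>j. p_jn D j n) n
             - nested_var (\<lambda>j. p_jn D j n) (nat \<lfloor>2 * h_index D n\<rfloor>)"
    "\<forall>\<^sub>F n in sequentially. nested_var (\<lambda>j. p_jn D j n) n
             - nested_var (\<lambda>j. p_jn D j n) (nat \<lfloor>2 * h_index D n\<rfloor>)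
        \<le> series_tail tail_weight (nat \<lfloor>2 * h_index D n\<rfloor> + 1)"
    using h1 by (auto elim!: eventually_mono dest: truncation_gap_bound[OF PD SD])
qed

section \<open>Counting indices and the estimators\<close>

text \<open>Counting sample points as a sum of indicators; this gives measurability.\<close>
lemma card_count_eq_sum_indicator:
  fixes n :: nat
  shows "real (card {i. i < n \<and> X i \<omega> \<in> A}) = (\<Sum>i<n. indicator A (X i \<omega>) :: real)"
proof -
  have "real (card {i. i < n \<and> X i \<omega> \<in> A}) = real (card ({..<n} \<inter> {i. X i \<omega> \<in> A}))"
    by (simp add: Int_def conj_commute lessThan_def)
  also have "\<dots> = (\<Sum>i\<in>{..<n} \<inter> {i. X i \<omega> \<in> A}. 1::real)" by simp
  also have "\<dots> = (\<Sum>i<n. if X i \<omega> \<in> A then 1 else 0)"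
    by (simp only: sum.inter_restrict[OF finite_lessThan] mem_Collect_eq)
  also have "\<dots> = (\<Sum>i<n. indicator A (X i \<omega>))"
    by (intro sum.cong refl) (simp add: indicator_def)
  finally show ?thesis .
qed

lemma few_points_event:
  fixes X :: "nat \<Rightarrow> 'a \<Rightarrow> real"
  assumes "\<And>i. X i \<in> borel_measurable M"
  shows "{\<omega> \<in> space M. real (card {i. i < n \<and> X i \<omega> \<in> {x..}}) < x} \<in> sets M"
  unfolding card_count_eq_sum_indicator using assms by measurable

definition level_indicator :: "(nat \<Rightarrow> 'a \<Rightarrow> real) \<Rightarrow> nat \<Rightarrow> nat \<Rightarrow> 'a \<Rightarrow> real" where
  "level_indicator X n j \<omega> = (if j \<le> card {i. i < n \<and> X i \<omega> \<in> {real j - 1<..}} then 1 else 0)"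

lemma H_tilde_eq_level_sum:
  assumes "1 \<le> n"
  shows "H_tilde X n \<omega> = (\<Sum>j=1..n. level_indicator X n j \<omega>)"
proof -
  have "emp_surv X n \<omega> (real j - 1) \<ge> real j / real n
      \<longleftrightarrow> real j \<le> real (card {i. i < n \<and> X i \<omega> \<in> {real j - 1<..}})" for j
    unfolding emp_surv_def using assms by (simp add: field_simps)
  then show ?thesis unfolding H_tilde_def level_indicator_def by simp
qed

lemma level_indicator_mult:
  "level_indicator X n j \<omega> * level_indicator X n l \<omega> = level_indicator X n (max j l) \<omega>"
proof -
  have mono: "card {i. i < n \<and> X i \<omega> \<in> {real b - 1<..}} \<le> card {i. i < n \<and> X i \<omega> \<in> {real a - 1<..}}"
    if "a \<le> b" for a b
    using that by (intro card_mono) auto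
  show ?thesis unfolding level_indicator_def
    using mono[of j l] mono[of l j] by (cases "j \<le> l") (auto simp: max_def)
qed

lemma V_n_eq_nested_var:
  "V_n D X n \<omega> = nested_var (\<lambda>j. p_jn D j n) (nat \<lfloor>3 * H_hat X n \<omega>\<rfloor>)"
  unfolding V_n_def Let_def by (rule nested_var_V_form)

lemma le_H_hat:
  assumes n: "1 \<le> n" and x: "0 \<le> x" "x \<le> real (card {i. i < n \<and> X i \<omega> \<in> {x..}})"
  shows "x \<le> H_hat X n \<omega>"
proof -
  have count: "real n * emp_surv_minus X n \<omega> y = real (card {i. i < n \<and> X i \<omega> \<in> {y..}})" for y
    unfolding emp_surv_minus_def using n by simp
  have "bdd_above {y. y \<ge> 0 \<and> real n * emp_surv_minus X n \<omega> y \<ge> y}"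
  proof (rule bdd_aboveI[where M="real n"])
    fix y assume "y \<in> {y. y \<ge> 0 \<and> real n * emp_surv_minus X n \<omega> y \<ge> y}"
    then have "y \<le> real (card {i. i < n \<and> X i \<omega> \<in> {y..}})" using count by auto
    also have "\<dots> \<le> real n" using card_mono[of "{..<n}" "{i. i < n \<and> X i \<omega> \<in> {y..}}"] by auto
    finally show "y \<le> real n" .
  qed
  then show ?thesis unfolding H_hat_def by (rule cSup_upper[rotated]) (use x count in auto)
qed

text \<open>As soon as at least 2h_n/3 sample points are \<ge> 2h_n/3, we have H^_n \<ge> 2h_n/3,
  so V_n lies between the truncation at floor(2 h_n) and the full variance polynomial.\<close>
lemma V_n_between:
  assumes PD: "prob_space D" and n: "1 \<le> n"
    and many: "2 * h_index D n / 3 \<le> real (card {i. i < n \<and> X i \<omega> \<in> {2 * h_index D n / 3..}})"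
  shows "nested_var (\<lambda>j. p_jn D j n) (nat \<lfloor>2 * h_index D n\<rfloor>) \<le> V_n D X n \<omega>
    \<and> V_n D X n \<omega> \<le> nested_var (\<lambda>j. p_jn D j n) n"
proof -
  have "2 * h_index D n / 3 \<le> H_hat X n \<omega>"
    by (rule le_H_hat[of n "2 * h_index D n / 3" X \<omega>, OF n _ many])
      (use h_index_nonneg[OF PD, of n] in simp)
  then have "nat \<lfloor>2 * h_index D n\<rfloor> \<le> nat \<lfloor>3 * H_hat X n \<omega>\<rfloor>"
    by (intro nat_mono floor_mono) simp
  then show ?thesis unfolding V_n_eq_nested_var
    using nested_var_mono_bound[of "\<lambda>j. p_jn D j n"] nested_var_le_support[of "\<lambda>j. p_jn D j n" n]
      p_jn_bounds[OF PD] p_jn_zero by fastforce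
qed

text \<open>Truncating the r-sum at any K only drops nonnegative terms of the full r-sum,
  which equals the variance polynomial at n.\<close>
lemma r_sum_le_nested_var:
  assumes PD: "prob_space D"
  shows "(\<Sum>j=1..K. r_jn D j n * (1 - p_jn D j n)) \<le> nested_var (\<lambda>j. p_jn D j n) n"
proof -
  have p01: "0 \<le> p_jn D l n" "p_jn D l n \<le> 1" for l using p_jn_bounds[OF PD] by auto
  have "0 \<le> r_jn D j n * (1 - p_jn D j n)" for j
    unfolding r_jn_def using p01 by (intro mult_nonneg_nonneg add_nonneg_nonneg sum_nonneg) auto
  then have "(\<Sum>j=1..K. r_jn D j n * (1 - p_jn D j n)) \<le> (\<Sum>j=1..n. r_jn D j n * (1 - p_jn D j n))"
    by (intro sum_truncate_le) (auto simp: r_jn_def p_jn_zero)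
  also have "\<dots> = nested_var (\<lambda>j. p_jn D j n) n"
    unfolding r_jn_def by (rule nested_var_r_form)
  finally show ?thesis .
qed

lemma rt_sum_le_r_sum:
  assumes PD: "prob_space D"
  shows "(\<Sum>j=1..nat \<lfloor>2 * h_index D n\<rfloor>. rt_jn D j n * (1 - p_jn D j n))
    \<le> (\<Sum>j=1..nat \<lfloor>2 * h_index D n\<rfloor>. r_jn D j n * (1 - p_jn D j n))"
proof (rule sum_mono)
  fix j
  have "(\<Sum>l=j+1..nat \<lfloor>2 * h_index D n\<rfloor>. p_jn D l n) \<le> (\<Sum>l=j+1..n. p_jn D l n)"
    using p_jn_bounds[OF PD] by (intro sum_truncate_le) (auto simp: p_jn_zero)
  then have "rt_jn D j n \<le> r_jn D j n" unfolding rt_jn_def r_jn_def by simp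
  then show "rt_jn D j n * (1 - p_jn D j n) \<le> r_jn D j n * (1 - p_jn D j n)"
    using p_jn_bounds[OF PD] by (intro mult_right_mono) auto
qed

lemma ratio_tendsto_one:
  fixes a b :: "nat \<Rightarrow> real"
  assumes diff: "(\<lambda>n. a n - b n) \<longlonglongrightarrow> 0" and c: "0 < c" "\<forall>\<^sub>F n in sequentially. c < a n"
  shows "(\<lambda>n. a n / b n) \<longlonglongrightarrow> 1"
proof -
  have rel: "(\<lambda>n. (a n - b n) / a n) \<longlonglongrightarrow> 0"
  proof (rule Lim_null_comparison)
    show "(\<lambda>n. \<bar>a n - b n\<bar> / c) \<longlonglongrightarrow> 0"
      using tendsto_rabs_zero[OF diff] by (intro tendsto_divide_zero)
    show "\<forall>\<^sub>F n in sequentially. norm ((a n - b n) / a n) \<le> \<bar>a n - b n\<bar> / c"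
      using c(2) by eventually_elim (use c(1) in \<open>auto simp: abs_divide intro!: divide_left_mono\<close>)
  qed
  have "(\<lambda>n. 1 / (1 - (a n - b n) / a n)) \<longlonglongrightarrow> 1 / (1 - 0)"
    by (intro tendsto_intros rel) simp
  moreover have "\<forall>\<^sub>F n in sequentially. 1 / (1 - (a n - b n) / a n) = a n / b n"
    using c(2) by eventually_elim (use c(1) in \<open>simp add: field_simps\<close>)
  ultimately show ?thesis by (simp add: Lim_transform_eventually)
qed

section \<open>An i.i.d. sample with law D\<close>

locale iid_sample = prob_space M for M :: "'a measure" +
  fixes X :: "nat \<Rightarrow> 'a \<Rightarrow> real" and D :: "real measure"
  assumes rv: "\<And>i. X i \<in> borel_measurable M"
    and indep: "indep_vars (\<lambda>_. borel) X UNIV"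
    and law: "\<And>i. distr M borel (X i) = D"
begin

lemma prob_space_D: "prob_space D"
  using prob_space_distr[OF rv[of 0]] law[of 0] by simp

lemma sets_D: "sets D = sets borel"
  using law[of 0, symmetric] by simp

lemma prob_preimage: "A \<in> sets borel \<Longrightarrow> prob (X i -` A \<inter> space M) = measure D A"
  unfolding law[of i, symmetric] using rv by (simp add: measure_distr)

lemma prob_pattern:
  assumes A: "A \<in> sets borel" and S: "S \<subseteq> {..<n}"
  shows "prob {\<omega> \<in> space M. \<forall>i<n. (X i \<omega> \<in> A) = (i \<in> S)}
    = measure D A ^ card S * (1 - measure D A) ^ (n - card S)"
proof (cases "n = 0")
  case True
  then show ?thesis using S by (simp add: prob_space)
next
  case False
  define E where "E i = (if i \<in> S then X i -` A \<inter> space M else X i -` (- A) \<inter> space M)" for i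
  have E_prob: "prob (E i) = (if i \<in> S then measure D A else 1 - measure D A)" for i
  proof -
    have "X i -` (- A) \<inter> space M = space M - (X i -` A \<inter> space M)" by auto
    moreover have "X i -` A \<inter> space M \<in> events" using rv A by (simp add: measurable_sets)
    ultimately show ?thesis
      unfolding E_def using prob_preimage[OF A] prob_compl by simp
  qed
  have E_space: "(\<Inter>i\<in>{..<n}. E i) \<subseteq> space M"
    using False by (intro INF_lower2[of 0]) (auto simp: E_def)
  have "{\<omega> \<in> space M. \<forall>i<n. (X i \<omega> \<in> A) = (i \<in> S)} = space M \<inter> (\<Inter>i\<in>{..<n}. E i)"
    unfolding E_def by auto
  also have "\<dots> = (\<Inter>i\<in>{..<n}. E i)" using E_space by blast
  also have "prob \<dots> = (\<Prod>i\<in>{..<n}. prob (E i))"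
  proof (rule indep_setsD[OF indep[unfolded indep_vars_def2, THEN conjunct2]])
    show "\<forall>j\<in>{..<n}. E j \<in> {X j -` B \<inter> space M |B. B \<in> sets borel}"
    proof
      fix j
      show "E j \<in> {X j -` B \<inter> space M |B. B \<in> sets borel}"
      proof (cases "j \<in> S")
        case True then show ?thesis unfolding E_def using A by auto
      next
        case False then show ?thesis unfolding E_def using borel_comp[OF A] by auto
      qed
    qed
  qed (use False in auto)
  also have "\<dots> = measure D A ^ card ({..<n} \<inter> S) * (1 - measure D A) ^ card ({..<n} - S)"
    unfolding E_prob by (simp add: prod.If_cases Diff_eq)
  also have "card ({..<n} - S) = n - card S"
    using S by (simp add: card_Diff_subset finite_subset)
  also have "{..<n} \<inter> S = S" using S by auto
  finally show ?thesis .
qed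

lemma count_prob:
  assumes A: "A \<in> sets borel"
  shows "prob {\<omega> \<in> space M. Q (card {i. i < n \<and> X i \<omega> \<in> A})} =
     (\<Sum>y\<in>{y. y \<le> n \<and> Q y}. real (n choose y) * measure D A ^ y * (1 - measure D A) ^ (n - y))"
proof -
  define F where "F S = {\<omega> \<in> space M. \<forall>i<n. (X i \<omega> \<in> A) = (i \<in> S)}" for S
  define SS where "SS = {S. S \<subseteq> {..<n} \<and> Q (card S)}"
  have "{\<omega> \<in> space M. Q (card {i. i < n \<and> X i \<omega> \<in> A})} = (\<Union>S\<in>SS. F S)"
  proof (intro equalityI subsetI)
    fix \<omega> assume "\<omega> \<in> {\<omega> \<in> space M. Q (card {i. i < n \<and> X i \<omega> \<in> A})}"
    then show "\<omega> \<in> (\<Union>S\<in>SS. F S)"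
      unfolding SS_def F_def by (intro UN_I[of "{i. i < n \<and> X i \<omega> \<in> A}"]) auto
  next
    fix \<omega> assume "\<omega> \<in> (\<Union>S\<in>SS. F S)"
    then obtain S where S: "S \<in> SS" "\<omega> \<in> F S" by auto
    then have "{i. i < n \<and> X i \<omega> \<in> A} = S" unfolding F_def SS_def by auto
    then show "\<omega> \<in> {\<omega> \<in> space M. Q (card {i. i < n \<and> X i \<omega> \<in> A})}"
      using S unfolding F_def SS_def by auto
  qed
  moreover have "prob (\<Union>S\<in>SS. F S) = (\<Sum>S\<in>SS. prob (F S))"
  proof (rule measure_finite_Union)
    have "F S = space M \<inter> (\<Inter>i<n. {\<omega> \<in> space M. X i \<omega> \<in> A \<longleftrightarrow> i \<in> S})" for S
      unfolding F_def by auto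
    then show "F ` SS \<subseteq> events" using rv A by (auto simp del: Int_iff)
  qed (auto simp: SS_def F_def disjoint_family_on_def emeasure_eq_measure)
  moreover have "(\<Sum>S\<in>SS. prob (F S))
      = (\<Sum>y\<in>{y. y \<le> n \<and> Q y}. \<Sum>S\<in>{S \<in> SS. card S = y}. prob (F S))"
    by (rule sum.group[symmetric])
      (auto simp: SS_def intro: card_mono[of "{..<n}", simplified])
  moreover have "(\<Sum>S\<in>{S \<in> SS. card S = y}. prob (F S))
      = real (n choose y) * measure D A ^ y * (1 - measure D A) ^ (n - y)"
    if "y \<in> {y. y \<le> n \<and> Q y}" for y
  proof -
    have "{S \<in> SS. card S = y} = {S. S \<subseteq> {..<n} \<and> card S = y}" using that unfolding SS_def by auto
    then have "(\<Sum>S\<in>{S \<in> SS. card S = y}. prob (F S))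
        = (\<Sum>S\<in>{S. S \<subseteq> {..<n} \<and> card S = y}. measure D A ^ y * (1 - measure D A) ^ (n - y))"
      unfolding F_def by (intro sum.cong refl) (auto simp: prob_pattern[OF A])
    then show ?thesis by (simp add: n_subsets)
  qed
  ultimately show ?thesis by simp
qed

lemma p_jn_eq_prob:
  assumes "1 \<le> j" "j \<le> n"
  shows "p_jn D j n = prob {\<omega> \<in> space M. j \<le> card {i. i < n \<and> X i \<omega> \<in> {real j - 1<..}}}"
proof -
  have "{y. y \<le> n \<and> j \<le> y} = {j..n}" by auto
  then show ?thesis
    using count_prob[of "{real j - 1<..}" "\<lambda>y. j \<le> y" n] assms
    unfolding p_jn_def surv_def by simp
qed

lemma level_indicator_measurable: "level_indicator X n j \<in> borel_measurable M"
proof -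
  have "level_indicator X n j
      = (\<lambda>\<omega>. if real j \<le> (\<Sum>i<n. indicator {real j - 1<..} (X i \<omega>) :: real) then 1 else 0)"
    unfolding level_indicator_def card_count_eq_sum_indicator[symmetric] by (auto simp: fun_eq_iff)
  also have "\<dots> \<in> borel_measurable M" using rv by measurable
  finally show ?thesis .
qed

lemma level_indicator_integrable: "integrable M (level_indicator X n j)"
  by (rule integrable_const_bound[where B=1])
    (auto simp: level_indicator_def level_indicator_measurable)

lemma level_indicator_expectation:
  assumes "1 \<le> j" "j \<le> n"
  shows "expectation (level_indicator X n j) = p_jn D j n"
proof -
  have "level_indicator X n j = indicator {\<omega>. j \<le> card {i. i < n \<and> X i \<omega> \<in> {real j - 1<..}}}"
    unfolding level_indicator_def by (auto simp: fun_eq_iff)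
  then show ?thesis using p_jn_eq_prob[OF assms] by (simp add: Collect_conj_eq Int_commute)
qed

lemma variance_H_tilde:
  assumes n: "1 \<le> n"
  shows "variance (H_tilde X n) = nested_var (\<lambda>j. p_jn D j n) n"
proof -
  let ?B = "level_indicator X n"
  have H: "H_tilde X n = (\<lambda>\<omega>. \<Sum>j=1..n. ?B j \<omega>)"
    by (rule ext) (rule H_tilde_eq_level_sum[OF n])
  have sq: "(\<lambda>\<omega>. (H_tilde X n \<omega>)\<^sup>2) = (\<lambda>\<omega>. \<Sum>j=1..n. \<Sum>l=1..n. ?B (max j l) \<omega>)"
    unfolding H power2_eq_square sum_product level_indicator_mult ..
  have var: "variance (H_tilde X n)
      = expectation (\<lambda>\<omega>. (H_tilde X n \<omega>)\<^sup>2) - (expectation (H_tilde X n))\<^sup>2"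
  proof (rule variance_eq)
    show "integrable M (H_tilde X n)" unfolding H by (auto simp: level_indicator_integrable)
    show "integrable M (\<lambda>\<omega>. (H_tilde X n \<omega>)\<^sup>2)"
      unfolding sq by (auto simp: level_indicator_integrable)
  qed
  have E2: "expectation (\<lambda>\<omega>. (H_tilde X n \<omega>)\<^sup>2) = (\<Sum>j=1..n. \<Sum>l=1..n. p_jn D (max j l) n)"
    unfolding sq by (simp add: level_indicator_integrable level_indicator_expectation max_def)
  have E1: "expectation (H_tilde X n) = (\<Sum>j=1..n. p_jn D j n)"
    unfolding H by (simp add: level_indicator_integrable level_indicator_expectation)
  have "variance (H_tilde X n)
      = (\<Sum>j=1..n. \<Sum>l=1..n. p_jn D (max j l) n) - (\<Sum>j=1..n. p_jn D j n)\<^sup>2"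
    using var unfolding E1 E2 .
  then show ?thesis using sum_sum_max[of "\<lambda>l. p_jn D l n" n] by (simp add: nested_var_def)
qed

lemma variance_minus_rt_sum_tendsto_zero:
  assumes Spos: "\<And>x. x \<ge> 0 \<Longrightarrow> surv D x > 0"
  shows "(\<lambda>n. variance (H_tilde X n)
      - (\<Sum>j=1..nat \<lfloor>2 * h_index D n\<rfloor>. rt_jn D j n * (1 - p_jn D j n))) \<longlonglongrightarrow> 0"
proof (rule Lim_transform_eventually)
  show "(\<lambda>n. nested_var (\<lambda>j. p_jn D j n) n
             - nested_var (\<lambda>j. p_jn D j n) (nat \<lfloor>2 * h_index D n\<rfloor>)) \<longlonglongrightarrow> 0"
    by (rule truncation_gap_tendsto_zero[OF prob_space_D sets_D Spos])
  show "\<forall>\<^sub>F n in sequentially. nested_var (\<lambda>j. p_jn D j n) n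
             - nested_var (\<lambda>j. p_jn D j n) (nat \<lfloor>2 * h_index D n\<rfloor>)
      = variance (H_tilde X n) - (\<Sum>j=1..nat \<lfloor>2 * h_index D n\<rfloor>. rt_jn D j n * (1 - p_jn D j n))"
    using eventually_ge_at_top[of 1]
    by eventually_elim (unfold variance_H_tilde rt_sum_eq_nested_var, rule refl)
qed

text \<open>Lower Chernoff bound: fewer than 2h_n/3 of the sample points reach 2h_n/3 only
  with probability exponentially small in h_n, because n S_-(2h_n/3) \<ge> 19 h_n / 20.\<close>
lemma prob_few_large_points:
  assumes h: "1 \<le> h_index D n"
  shows "prob {\<omega> \<in> space M. real (card {i. i < n \<and> X i \<omega> \<in> {2 * h_index D n / 3..}})
      < 2 * h_index D n / 3} \<le> exp (-(11/720) * h_index D n)"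
proof -
  define h where "h = h_index D n"
  define x0 where "x0 = 2 * h / 3"
  have "prob {\<omega> \<in> space M. real (card {i. i < n \<and> X i \<omega> \<in> {x0..}}) < x0}
      = (\<Sum>y\<in>{y. y \<le> n \<and> real y < x0}.
          real (n choose y) * measure D {x0..} ^ y * (1 - measure D {x0..}) ^ (n - y))"
    by (rule count_prob) simp
  also have "\<dots> \<le> exp (x0/3 - real n * measure D {x0..} / 4)"
    by (rule binomial_lower_tail) (use prob_space.prob_le_1[OF prob_space_D] in auto)
  also have "\<dots> \<le> exp (-(11/720) * h)"
  proof -
    have "19/20 * h < h" using h unfolding h_def by simp
    then obtain y where y: "19/20 * h < y" "0 \<le> y" "y \<le> real n * surv_minus D y"
      using below_h_index[OF prob_space_D] unfolding h_def by blast
    have "x0 \<le> y" using y h unfolding x0_def h_def by simp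
    then have "surv_minus D y \<le> surv_minus D x0" by (rule surv_minus_antimono[OF prob_space_D sets_D])
    then have "real n * surv_minus D y \<le> real n * measure D {x0..}"
      unfolding surv_minus_def by (intro mult_left_mono) auto
    then have "19/20 * h \<le> real n * measure D {x0..}" using y by linarith
    then show ?thesis unfolding x0_def by simp
  qed
  finally show ?thesis unfolding x0_def h_def .
qed

lemma V_n_deviation_subset:
  assumes n: "1 \<le> n" and Vpos: "0 < variance (H_tilde X n)"
    and gap: "nested_var (\<lambda>j. p_jn D j n) n - nested_var (\<lambda>j. p_jn D j n) (nat \<lfloor>2 * h_index D n\<rfloor>)
      < \<epsilon> * variance (H_tilde X n)"
  shows "{\<omega> \<in> space M. \<bar>V_n D X n \<omega> / variance (H_tilde X n) - 1\<bar> > \<epsilon>}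
    \<subseteq> {\<omega> \<in> space M. real (card {i. i < n \<and> X i \<omega> \<in> {2 * h_index D n / 3..}}) < 2 * h_index D n / 3}"
proof (intro subsetI CollectI conjI; elim CollectE conjE)
  fix \<omega> assume \<omega>: "\<omega> \<in> space M" and dev: "\<bar>V_n D X n \<omega> / variance (H_tilde X n) - 1\<bar> > \<epsilon>"
  show "\<omega> \<in> space M" by (rule \<omega>)
  show "real (card {i. i < n \<and> X i \<omega> \<in> {2 * h_index D n / 3..}}) < 2 * h_index D n / 3"
  proof (rule ccontr)
    assume "\<not> ?thesis"
    then have many: "2 * h_index D n / 3 \<le> real (card {i. i < n \<and> X i \<omega> \<in> {2 * h_index D n / 3..}})"
      by simp
    have "nested_var (\<lambda>j. p_jn D j n) (nat \<lfloor>2 * h_index D n\<rfloor>) \<le> V_n D X n \<omega>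
        \<and> V_n D X n \<omega> \<le> variance (H_tilde X n)"
      using V_n_between[of D n X \<omega>, OF prob_space_D n many] unfolding variance_H_tilde[OF n] .
    then have d1: "0 \<le> variance (H_tilde X n) - V_n D X n \<omega>"
      and d2: "variance (H_tilde X n) - V_n D X n \<omega> < \<epsilon> * variance (H_tilde X n)"
      using gap variance_H_tilde[OF n] by auto
    have "\<bar>V_n D X n \<omega> / variance (H_tilde X n) - 1\<bar>
        = (variance (H_tilde X n) - V_n D X n \<omega>) / variance (H_tilde X n)"
      using Vpos d1 by (simp add: field_simps abs_if)
    also have "\<dots> < \<epsilon>" using d2 Vpos by (simp add: field_simps)
    finally show False using dev by simp
  qed
qed

lemma V_n_deviation_prob_le:
  assumes n: "1 \<le> n" and h: "1 \<le> h_index D n" and Vpos: "0 < variance (H_tilde X n)"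
    and gap: "nested_var (\<lambda>j. p_jn D j n) n - nested_var (\<lambda>j. p_jn D j n) (nat \<lfloor>2 * h_index D n\<rfloor>)
      < \<epsilon> * variance (H_tilde X n)"
  shows "prob {\<omega> \<in> space M. \<bar>V_n D X n \<omega> / variance (H_tilde X n) - 1\<bar> > \<epsilon>}
    \<le> exp (-(11/720) * h_index D n)"
proof -
  have "prob {\<omega> \<in> space M. \<bar>V_n D X n \<omega> / variance (H_tilde X n) - 1\<bar> > \<epsilon>}
      \<le> prob {\<omega> \<in> space M. real (card {i. i < n \<and> X i \<omega> \<in> {2 * h_index D n / 3..}})
               < 2 * h_index D n / 3}"
    by (rule finite_measure_mono[OF V_n_deviation_subset[OF n Vpos gap] few_points_event[OF rv]])
  also have "\<dots> \<le> exp (-(11/720) * h_index D n)"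
    by (rule prob_few_large_points[OF h])
  finally show ?thesis .
qed

lemma V_n_ratio_tendsto_in_prob:
  assumes Spos: "\<And>x. x \<ge> 0 \<Longrightarrow> surv D x > 0"
    and c: "0 < c" "\<forall>\<^sub>F n in sequentially. c < variance (H_tilde X n)" and \<epsilon>: "0 < \<epsilon>"
  shows "(\<lambda>n. prob {\<omega> \<in> space M. \<bar>V_n D X n \<omega> / variance (H_tilde X n) - 1\<bar> > \<epsilon>}) \<longlonglongrightarrow> 0"
proof (rule tendsto_sandwich[OF _ _ tendsto_const])
  have htop: "filterlim (h_index D) at_top sequentially"
    by (rule h_index_tendsto_infinity[OF prob_space_D sets_D Spos])
  have "((\<lambda>x::real. exp (-(11/720) * x)) \<longlongrightarrow> 0) at_top" by real_asymp
  from filterlim_compose[OF this htop]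
  show "(\<lambda>n. exp (-(11/720) * h_index D n)) \<longlonglongrightarrow> 0" by simp
  have "\<forall>\<^sub>F n in sequentially. nested_var (\<lambda>j. p_jn D j n) n
      - nested_var (\<lambda>j. p_jn D j n) (nat \<lfloor>2 * h_index D n\<rfloor>) < \<epsilon> * c"
    using order_tendstoD(2)[OF truncation_gap_tendsto_zero[OF prob_space_D sets_D Spos]] \<epsilon> c(1)
    by simp
  moreover have "\<forall>\<^sub>F n in sequentially. 1 \<le> h_index D n"
    using htop by (simp add: filterlim_at_top)
  ultimately show "\<forall>\<^sub>F n in sequentially.
      prob {\<omega> \<in> space M. \<bar>V_n D X n \<omega> / variance (H_tilde X n) - 1\<bar> > \<epsilon>}
        \<le> exp (-(11/720) * h_index D n)"
    using c(2) eventually_ge_at_top[of 1]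
  proof eventually_elim
    case (elim n)
    have gap: "nested_var (\<lambda>j. p_jn D j n) n - nested_var (\<lambda>j. p_jn D j n) (nat \<lfloor>2 * h_index D n\<rfloor>)
        < \<epsilon> * variance (H_tilde X n)"
      using elim(1) mult_strict_left_mono[OF elim(3) \<epsilon>] by linarith
    have Vpos: "0 < variance (H_tilde X n)" using elim(3) c(1) by linarith
    show ?case by (rule V_n_deviation_prob_le[OF elim(4,2) Vpos gap])
  qed
qed simp

lemma variance_lower_bounds:
  assumes n: "1 \<le> n"
  shows "variance (H_tilde X n) \<ge> (\<Sum>j=1..nat \<lfloor>2 * h_index D n\<rfloor>. r_jn D j n * (1 - p_jn D j n))
    \<and> (\<Sum>j=1..nat \<lfloor>2 * h_index D n\<rfloor>. r_jn D j n * (1 - p_jn D j n))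
        \<ge> (\<Sum>j=1..nat \<lfloor>2 * h_index D n\<rfloor>. rt_jn D j n * (1 - p_jn D j n))"
  unfolding variance_H_tilde[OF n]
  using r_sum_le_nested_var[OF prob_space_D] rt_sum_le_r_sum[OF prob_space_D] by blast

lemma variance_asymptotics:
  assumes Spos: "\<And>x. x \<ge> 0 \<Longrightarrow> surv D x > 0"
    and pos_liminf: "liminf (\<lambda>n. ereal (variance (H_tilde X n))) > 0"
  shows "(\<lambda>n. variance (H_tilde X n) /
          (\<Sum>j=1..nat \<lfloor>2 * h_index D n\<rfloor>. rt_jn D j n * (1 - p_jn D j n))) \<longlonglongrightarrow> 1"
    and "\<And>\<epsilon>. 0 < \<epsilon> \<Longrightarrow>
      (\<lambda>n. prob {\<omega>\<in>space M. \<bar>V_n D X n \<omega> / variance (H_tilde X n) - 1\<bar> > \<epsilon>}) \<longlonglongrightarrow> 0"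
proof -
  obtain c where c: "0 < c" "ereal c < liminf (\<lambda>n. ereal (variance (H_tilde X n)))"
    using ereal_dense2[OF pos_liminf] by auto
  have above_c: "\<forall>\<^sub>F n in sequentially. c < variance (H_tilde X n)"
    using less_LiminfD[OF c(2)] by simp
  show "(\<lambda>n. variance (H_tilde X n) /
          (\<Sum>j=1..nat \<lfloor>2 * h_index D n\<rfloor>. rt_jn D j n * (1 - p_jn D j n))) \<longlonglongrightarrow> 1"
    by (rule ratio_tendsto_one[OF variance_minus_rt_sum_tendsto_zero[OF Spos] c(1) above_c])
  show "(\<lambda>n. prob {\<omega>\<in>space M. \<bar>V_n D X n \<omega> / variance (H_tilde X n) - 1\<bar> > \<epsilon>}) \<longlonglongrightarrow> 0"
    if "0 < \<epsilon>" for \<epsilon>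
    by (rule V_n_ratio_tendsto_in_prob[OF Spos c(1) above_c that])
qed

end

theorem theorem4p1:
  fixes M :: "'a measure" and X :: "nat \<Rightarrow> 'a \<Rightarrow> real" and D :: "real measure"
  assumes M: "prob_space M"
    and rv: "\<And>i. X i \<in> borel_measurable M"
    and indep: "prob_space.indep_vars M (\<lambda>_. borel) X UNIV"
    and law: "\<And>i. distr M borel (X i) = D"
    and pos: "AE x in D. 0 < x"
    and Spos: "\<And>x. x \<ge> 0 \<Longrightarrow> surv D x > 0"
  shows
    "(\<forall>n\<ge>1.
        prob_space.variance M (H_tilde X n)
          \<ge> (\<Sum>j=1..nat \<lfloor>2 * h_index D n\<rfloor>. r_jn D j n * (1 - p_jn D j n))
      \<and> (\<Sum>j=1..nat \<lfloor>2 * h_index D n\<rfloor>. r_jn D j n * (1 - p_jn D j n))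
          \<ge> (\<Sum>j=1..nat \<lfloor>2 * h_index D n\<rfloor>. rt_jn D j n * (1 - p_jn D j n)))
     \<and> (liminf (\<lambda>n. ereal (prob_space.variance M (H_tilde X n))) > 0 \<longrightarrow>
        ((\<lambda>n. prob_space.variance M (H_tilde X n) /
               (\<Sum>j=1..nat \<lfloor>2 * h_index D n\<rfloor>. rt_jn D j n * (1 - p_jn D j n)))
           \<longlonglongrightarrow> 1)
        \<and> (\<forall>\<epsilon>>0. (\<lambda>n. measure M {\<omega>\<in>space M.
              \<bar>V_n D X n \<omega> / prob_space.variance M (H_tilde X n) - 1\<bar> > \<epsilon>}) \<longlonglongrightarrow> 0))"
proof -
  interpret iid_sample M X D
    by (rule iid_sample.intro[OF M iid_sample_axioms.intro[OF rv indep law]])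
  show ?thesis
    using variance_lower_bounds variance_asymptotics[OF Spos] by blast
qed

end
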